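(* Let $X$ be a Banach space and let $A$ be a separable closed convex bounded subset of $X$ having small combinations of slices. Then $A$ is an SCD set.
   Context: A slice of a convex bounded set $A$ is $S(A,x^*,\varepsilon)=\{x\in A:\ \mathrm{Re}\,x^*(x)>\sup\mathrm{Re}\,x^*(A)-\varepsilon\}$ ($x^*\in X^*$, $\varepsilon>0$). A convex combination of slices of $A$ is a set $\sum_{i=1}^m\lambda_iS_i$ with $\lambda_i>0$, $\sum\lambda_i=1$, $S_i$ slices of $A$. $A$ has small combinations of slices if every slice of $A$ contains convex combinations of slices of $A$ of arbitrarily small diameter. $A$ is an SCD set if there is a sequence $(S_n)$ of slices of $A$ such that $A\subseteq\overline{\mathrm{conv}}(B)$ for every $B\subseteq A$ intersecting every $S_n$. *)

theory Defs
  imports "HOL-Analysis.Analysis"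
begin

definition slice :: "'a::real_normed_vector set \<Rightarrow> ('a \<Rightarrow> real) \<Rightarrow> real \<Rightarrow> 'a set" where
  "slice A f eps = {x \<in> A. f x > Sup (f ` A) - eps}"

definition is_slice :: "'a::real_normed_vector set \<Rightarrow> 'a set \<Rightarrow> bool" where
  "is_slice A S \<longleftrightarrow> (\<exists>f eps. bounded_linear f \<and> eps > 0 \<and> S = slice A f eps)"

definition is_ccs :: "'a::real_normed_vector set \<Rightarrow> 'a set \<Rightarrow> bool" where
  "is_ccs A C \<longleftrightarrow> (\<exists>m::nat. \<exists>lam::nat \<Rightarrow> real. \<exists>S::nat \<Rightarrow> 'a set.
      m \<ge> 1 \<and> (\<forall>i<m. lam i > 0 \<and> is_slice A (S i)) \<and> (\<Sum>i<m. lam i) = 1 \<and>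
      C = {(\<Sum>i<m. lam i *\<^sub>R x i) | x. \<forall>i<m. x i \<in> S i})"

definition small_comb_slices :: "'a::real_normed_vector set \<Rightarrow> bool" where
  "small_comb_slices A \<longleftrightarrow>
     (\<forall>S. is_slice A S \<longrightarrow> (\<forall>e>0. \<exists>C. is_ccs A C \<and> C \<subseteq> S \<and> diameter C < e))"

definition SCD_set :: "'a::real_normed_vector set \<Rightarrow> bool" where
  "SCD_set A \<longleftrightarrow> (\<exists>Sn::nat \<Rightarrow> 'a set. (\<forall>n. is_slice A (Sn n)) \<and>
      (\<forall>B. B \<subseteq> A \<and> (\<forall>n. B \<inter> Sn n \<noteq> {}) \<longrightarrow> A \<subseteq> closure (convex hull B)))"

definition separable_set :: "'a::metric_space set \<Rightarrow> bool" where
  "separable_set A \<longleftrightarrow> (\<exists>D. countable D \<and> D \<subseteq> A \<and> A \<subseteq> closure D)"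

end

(* Fix a countable dense subset D of A.  For every d in D and every n, if some convex
   combination of slices of A lies in the ball of radius 1/(n+1) around d, choose one; the
   countably many slices occurring in these choices form the sequence.  Suppose B meets all of
   them and let S be a slice of A.  By small combinations of slices, a slightly thinner slice
   contains a combination of slices of tiny diameter, hence lying in one of the balls above.  The
   combination chosen for that ball has each of its slices met by B, so conv B contains a point
   of it; this point is close to the thinner slice and therefore lies in S.  So conv B meets every
   slice of A, and by the Hahn-Banach separation theorem A is contained in the closure of conv B. *)

theory Submission
  imports Defs
begin

section \<open>The Hahn-Banach theorem\<close>

definition sublinear :: "('a::real_vector \<Rightarrow> real) \<Rightarrow> bool" where
  "sublinear p \<longleftrightarrow> (\<forall>x y. p (x + y) \<le> p x + p y) \<and> (\<forall>t x. 0 < t \<longrightarrow> p (t *\<^sub>R x) = t * p x)"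

lemma sublinear_add: "sublinear p \<Longrightarrow> p (x + y) \<le> p x + p y"
  by (simp add: sublinear_def)

lemma sublinear_scaleR: "sublinear p \<Longrightarrow> 0 < t \<Longrightarrow> p (t *\<^sub>R x) = t * p x"
  by (simp add: sublinear_def)

lemma sublinear_zero: "sublinear p \<Longrightarrow> p 0 = 0"
  using sublinear_scaleR[of p 2 0] by simp

(* Zorn's lemma is applied to subspaces of 'a \<times> real lying below the graph of p; a maximal one
   turns out to be the graph of a linear functional defined everywhere. *)
definition dominated_subspace :: "('a::real_vector \<Rightarrow> real) \<Rightarrow> ('a \<times> real) set \<Rightarrow> bool" where
  "dominated_subspace p G \<longleftrightarrow> subspace G \<and> (\<forall>x a. (x, a) \<in> G \<longrightarrow> a \<le> p x)"

lemma dominated_subspace_unique: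
  assumes "sublinear p" "dominated_subspace p G" "(x, a) \<in> G" "(x, b) \<in> G"
  shows "a = b"
proof (rule ccontr)
  assume "a \<noteq> b"
  have G: "subspace G" and dom: "\<And>x a. (x, a) \<in> G \<Longrightarrow> a \<le> p x"
    using assms(2) by (auto simp: dominated_subspace_def)
  have "(0, a - b) \<in> G" using subspace_diff[OF G assms(3,4)] by simp
  then have "(1 / (a - b)) *\<^sub>R (0, a - b) \<in> G" by (rule subspace_scale[OF G])
  then have "(0, 1) \<in> G" using \<open>a \<noteq> b\<close> by simp
  then show False using dom sublinear_zero[OF assms(1)] by fastforce
qed

lemma dominated_subspace_insert:
  assumes p: "sublinear p" and G: "dominated_subspace p G"
    and lower: "\<And>h a. (h, a) \<in> G \<Longrightarrow> a - p (h - x0) \<le> c"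
    and upper: "\<And>h a. (h, a) \<in> G \<Longrightarrow> c \<le> p (h + x0) - a"
  shows "dominated_subspace p (span (insert (x0, c) G))"
proof -
  have sub: "subspace G" and dom: "\<And>x a. (x, a) \<in> G \<Longrightarrow> a \<le> p x"
    using G by (auto simp: dominated_subspace_def)
  have scale: "(t *\<^sub>R x, t * a) \<in> G" if "(x, a) \<in> G" for t x a
    using subspace_scale[OF sub that, of t] by simp
  have "b \<le> p y" if yb: "(y, b) \<in> span (insert (x0, c) G)" for y b
  proof -
    obtain t where "(y, b) - t *\<^sub>R (x0, c) \<in> span G" using yb unfolding span_insert by blast
    then have hG: "(y - t *\<^sub>R x0, b - t * c) \<in> G" using span_eq_iff[THEN iffD2, OF sub] by simp
    consider "t = 0" | "t > 0" | "t < 0" by linarith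
    then show ?thesis
    proof cases
      case 1 then show ?thesis using dom[OF hG] by simp
    next
      case 2
      have "c \<le> p ((1/t) *\<^sub>R (y - t *\<^sub>R x0) + x0) - (1/t) * (b - t * c)"
        using upper[OF scale[OF hG]] .
      also have "(1/t) *\<^sub>R (y - t *\<^sub>R x0) + x0 = (1/t) *\<^sub>R y" using 2 by (simp add: algebra_simps)
      finally show ?thesis using 2 sublinear_scaleR[OF p, of "1/t" y] by (simp add: field_simps)
    next
      case 3
      have "(-1/t) * (b - t * c) - p ((-1/t) *\<^sub>R (y - t *\<^sub>R x0) - x0) \<le> c"
        using lower[OF scale[OF hG]] .
      also have "(-1/t) *\<^sub>R (y - t *\<^sub>R x0) - x0 = (-1/t) *\<^sub>R y" using 3 by (simp add: algebra_simps)
      finally show ?thesis using 3 sublinear_scaleR[OF p, of "-1/t" y] by (simp add: field_simps)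
    qed
  qed
  then show ?thesis unfolding dominated_subspace_def using subspace_span by blast
qed

lemma dominated_subspace_extend:
  assumes p: "sublinear p" and G: "dominated_subspace p G"
  shows "\<exists>c. dominated_subspace p (span (insert (x0, c) G))"
proof -
  have sub: "subspace G" and dom: "\<And>x a. (x, a) \<in> G \<Longrightarrow> a \<le> p x"
    using G by (auto simp: dominated_subspace_def)
  have between: "a1 - p (h1 - x0) \<le> p (h2 + x0) - a2"
    if "(h1, a1) \<in> G" "(h2, a2) \<in> G" for h1 a1 h2 a2
  proof -
    have "a1 + a2 \<le> p (h1 + h2)" using dom subspace_add[OF sub that] by simp
    also have "\<dots> \<le> p (h1 - x0) + p (h2 + x0)"
      using sublinear_add[OF p, of "h1 - x0" "h2 + x0"] by simp
    finally show ?thesis by simp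
  qed
  define L where "L = {a - p (h - x0) | h a. (h, a) \<in> G}"
  have G0: "(0, 0) \<in> G" using subspace_0[OF sub] by (simp add: zero_prod_def)
  have "bdd_above L" unfolding bdd_above_def L_def using between[OF _ G0] by auto
  then have "a - p (h - x0) \<le> Sup L" if "(h, a) \<in> G" for h a
    using that unfolding L_def by (auto intro: cSup_upper)
  moreover have "Sup L \<le> p (h + x0) - a" if "(h, a) \<in> G" for h a
    using G0 by (intro cSup_least) (auto simp: L_def intro: between[OF _ that])
  ultimately show ?thesis using dominated_subspace_insert[OF p G] by blast
qed

lemma subspace_Union_chain:
  assumes "C \<noteq> {}" "\<And>X. X \<in> C \<Longrightarrow> subspace X" "\<And>X Y. X \<in> C \<Longrightarrow> Y \<in> C \<Longrightarrow> X \<subseteq> Y \<or> Y \<subseteq> X"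
  shows "subspace (\<Union>C)"
  unfolding subspace_def
proof (intro conjI ballI allI)
  show "0 \<in> \<Union>C" using assms(1,2) subspace_0 by blast
next
  fix x y assume "x \<in> \<Union>C" "y \<in> \<Union>C"
  then obtain X Y where "X \<in> C" "Y \<in> C" "x \<in> X" "y \<in> Y" by blast
  then show "x + y \<in> \<Union>C"
    using assms(2)[of X] assms(2)[of Y] assms(3)[of X Y] subspace_add by blast
next
  fix c x assume "x \<in> \<Union>C"
  then show "c *\<^sub>R x \<in> \<Union>C" using assms(2) subspace_scale by blast
qed

lemma dominated_subspace_maximal:
  assumes "dominated_subspace p G0"
  obtains M where "G0 \<subseteq> M" "dominated_subspace p M"
    "\<And>X. dominated_subspace p X \<Longrightarrow> M \<subseteq> X \<Longrightarrow> X = M"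
proof -
  define \<A> where "\<A> = {G. G0 \<subseteq> G \<and> dominated_subspace p G}"
  have bound: "\<exists>U\<in>\<A>. \<forall>X\<in>C. X \<subseteq> U" if C: "subset.chain \<A> C" for C
  proof (cases "C = {}")
    case True
    then show ?thesis using assms by (auto simp: \<A>_def)
  next
    case False
    have "subspace (\<Union>C)"
      using C False by (intro subspace_Union_chain)
        (auto simp: subset_chain_def \<A>_def dominated_subspace_def)
    moreover have "G0 \<subseteq> \<Union>C"
      using C False unfolding subset_chain_def \<A>_def by blast
    moreover have "\<forall>x a. (x, a) \<in> \<Union>C \<longrightarrow> a \<le> p x"
      using C by (auto simp: subset_chain_def \<A>_def dominated_subspace_def)
    ultimately have "\<Union>C \<in> \<A>" by (simp add: \<A>_def dominated_subspace_def)
    then show ?thesis by blast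
  qed
  have "\<exists>M\<in>\<A>. \<forall>X\<in>\<A>. M \<subseteq> X \<longrightarrow> X = M" by (rule subset_Zorn) (rule bound)
  then obtain M where "M \<in> \<A>" "\<And>X. X \<in> \<A> \<Longrightarrow> M \<subseteq> X \<Longrightarrow> X = M" by blast
  then show ?thesis using that by (auto simp: \<A>_def)
qed

lemma dominated_linear_extension:
  assumes p: "sublinear p" and G0: "dominated_subspace p G0"
  obtains f where "linear f" "\<And>x. f x \<le> p x" "\<And>x a. (x, a) \<in> G0 \<Longrightarrow> f x = a"
proof -
  obtain M where G0M: "G0 \<subseteq> M" and M: "dominated_subspace p M"
    and max: "\<And>X. dominated_subspace p X \<Longrightarrow> M \<subseteq> X \<Longrightarrow> X = M"
    using dominated_subspace_maximal[OF G0] by blast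
  have sub: "subspace M" using M by (simp add: dominated_subspace_def)
  have total: "\<exists>a. (x, a) \<in> M" for x
  proof -
    obtain c where "dominated_subspace p (span (insert (x, c) M))"
      using dominated_subspace_extend[OF p M] by blast
    then have "span (insert (x, c) M) = M"
      by (intro max) (auto intro: span_base)
    then show ?thesis by (metis insertI1 span_base)
  qed
  have unique: "a = b" if "(x, a) \<in> M" "(x, b) \<in> M" for x a b
    using dominated_subspace_unique[OF p M that] .
  define f where "f x = (THE a. (x, a) \<in> M)" for x
  have fM: "(x, f x) \<in> M" for x
    unfolding f_def using total unique by (metis theI)
  have "linear f"
  proof (rule linearI)
    show "f (x + y) = f x + f y" for x y
      using unique[OF fM] subspace_add[OF sub fM fM] by simp
    show "f (c *\<^sub>R x) = c *\<^sub>R f x" for c x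
      using unique[OF fM] subspace_scale[OF sub fM] by simp
  qed
  moreover have "f x \<le> p x" for x using M fM by (simp add: dominated_subspace_def)
  moreover have "f x = a" if "(x, a) \<in> G0" for x a using unique fM G0M that by blast
  ultimately show ?thesis using that by blast
qed

lemma sublinear_supporting_linear:
  assumes p: "sublinear p"
  obtains f where "linear f" "\<And>x. f x \<le> p x" "f z = p z"
proof -
  have "k * p z \<le> p (k *\<^sub>R z)" for k
  proof (cases "k > 0")
    case True then show ?thesis using sublinear_scaleR[OF p] by simp
  next
    case False
    have "0 \<le> p (k *\<^sub>R z) + p ((-k) *\<^sub>R z)"
      using sublinear_add[OF p, of "k *\<^sub>R z" "(-k) *\<^sub>R z"] sublinear_zero[OF p]
      by (simp flip: scaleR_left_distrib)
    moreover have "p ((-k) *\<^sub>R z) = (-k) * p z" if "k < 0"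
      using sublinear_scaleR[OF p, of "-k" z] that by simp
    ultimately show ?thesis using False sublinear_zero[OF p] by (cases "k = 0") auto
  qed
  then have "dominated_subspace p (span {(z, p z)})"
    using subspace_span[of "{(z, p z)}"] by (auto simp: dominated_subspace_def span_singleton)
  then obtain f where "linear f" "\<And>x. f x \<le> p x" "\<And>x a. (x, a) \<in> span {(z, p z)} \<Longrightarrow> f x = a"
    using dominated_linear_extension[OF p] by blast
  moreover have "(z, p z) \<in> span {(z, p z)}" by (simp add: span_base)
  ultimately show ?thesis using that by blast
qed

section \<open>Separating a point from a convex set\<close>

lemma infdist_ge:
  assumes "C \<noteq> {}" "\<And>c. c \<in> C \<Longrightarrow> d \<le> dist x c"
  shows "d \<le> infdist x C"
  unfolding infdist_notempty[OF assms(1)] using assms by (intro cINF_greatest) auto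

lemma infdist_convex_cone_add:
  fixes C :: "'a::real_normed_vector set"
  assumes C: "convex_cone C"
  shows "infdist (x + y) C \<le> infdist x C + infdist y C"
proof -
  have Cne: "C \<noteq> {}" using C by (rule convex_cone_nonempty)
  have step: "infdist (x + y) C - dist y c2 \<le> dist x c1" if "c1 \<in> C" "c2 \<in> C" for c1 c2
  proof -
    have "infdist (x + y) C \<le> dist (x + y) (c1 + c2)"
      using convex_cone_add[OF C that] by (rule infdist_le)
    also have "\<dots> \<le> dist x c1 + dist y c2"
      using norm_triangle_ineq[of "x - c1" "y - c2"] by (simp add: dist_norm algebra_simps)
    finally show ?thesis by simp
  qed
  have "infdist (x + y) C - infdist x C \<le> dist y c2" if "c2 \<in> C" for c2
    using infdist_ge[OF Cne step[OF _ that]] by linarith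
  then have "infdist (x + y) C - infdist x C \<le> infdist y C" by (rule infdist_ge[OF Cne])
  then show ?thesis by simp
qed

lemma infdist_convex_cone_scaleR_le:
  fixes C :: "'a::real_normed_vector set"
  assumes C: "convex_cone C" and t: "t > 0"
  shows "infdist (t *\<^sub>R x) C \<le> t * infdist x C"
proof -
  have "infdist (t *\<^sub>R x) C / t \<le> dist x c" if "c \<in> C" for c
  proof -
    have "infdist (t *\<^sub>R x) C \<le> dist (t *\<^sub>R x) (t *\<^sub>R c)"
      using convex_cone_scaleR[OF C _ that, of t] t by (intro infdist_le) simp
    also have "\<dots> = t * dist x c"
      using t by (simp add: dist_norm flip: scaleR_diff_right)
    finally show ?thesis using t by (simp add: field_simps)
  qed
  then have "infdist (t *\<^sub>R x) C / t \<le> infdist x C"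
    using convex_cone_nonempty[OF C] by (intro infdist_ge)
  then show ?thesis using t by (simp add: field_simps)
qed

lemma sublinear_infdist_convex_cone:
  fixes C :: "'a::real_normed_vector set"
  assumes C: "convex_cone C"
  shows "sublinear (\<lambda>x. infdist x C)"
  unfolding sublinear_def
proof (intro conjI allI impI)
  show "infdist (x + y) C \<le> infdist x C + infdist y C" for x y
    using C by (rule infdist_convex_cone_add)
  fix t :: real and x assume t: "0 < t"
  have "infdist x C = infdist ((1 / t) *\<^sub>R (t *\<^sub>R x)) C" using t by simp
  also have "\<dots> \<le> (1 / t) * infdist (t *\<^sub>R x) C"
    using t by (intro infdist_convex_cone_scaleR_le[OF C]) simp
  finally have "t * infdist x C \<le> infdist (t *\<^sub>R x) C" using t by (simp add: field_simps)
  then show "infdist (t *\<^sub>R x) C = t * infdist x C"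
    using infdist_convex_cone_scaleR_le[OF C t, of x] by simp
qed

lemma infdist_convex_cone_hull_ge:
  fixes U :: "'a::real_normed_vector set"
  assumes U: "convex U" and u0: "u0 \<in> U" and r: "0 \<le> r" and far: "\<And>u. u \<in> U \<Longrightarrow> r \<le> norm u"
  shows "r \<le> infdist (- u0) (convex_cone hull U)"
proof (rule infdist_ge)
  show "convex_cone hull U \<noteq> {}" by (rule convex_cone_hull_nonempty)
  fix c assume "c \<in> convex_cone hull U"
  moreover have "U \<noteq> {}" using u0 by blast
  ultimately have "c \<in> (\<Union>u\<in>U. \<Union>t\<in>{0..}. {t *\<^sub>R u})"
    using convex_cone_hull_convex_hull_nonempty convex_hull_eq[THEN iffD2, OF U] by metis
  then obtain t u where c: "c = t *\<^sub>R u" "t \<ge> 0" "u \<in> U" by auto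
  have "(1 / (1 + t)) *\<^sub>R u0 + (t / (1 + t)) *\<^sub>R u \<in> U"
    using U u0 c unfolding convex_def by (simp add: add_divide_distrib[symmetric])
  also have "(1 / (1 + t)) *\<^sub>R u0 + (t / (1 + t)) *\<^sub>R u = (1 / (1 + t)) *\<^sub>R (u0 + c)"
    using c by (simp add: scaleR_add_right)
  finally have w: "(1 / (1 + t)) *\<^sub>R (u0 + c) \<in> U" .
  have "r \<le> norm ((1 / (1 + t)) *\<^sub>R (u0 + c))" using far[OF w] .
  also have "\<dots> = norm (u0 + c) / (1 + t)" using c(2) by simp
  finally have "r * (1 + t) \<le> norm (u0 + c)" using c(2) by (simp add: pos_le_divide_eq)
  moreover have "dist (- u0) c = norm (u0 + c)"
    by (simp add: dist_norm norm_minus_commute add.commute flip: diff_minus_eq_add)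
  ultimately show "r \<le> dist (- u0) c"
    using mult_nonneg_nonneg[OF r c(2)] by (simp add: distrib_left)
qed

lemma bounded_linear_if_le_norm:
  fixes f :: "'a::real_normed_vector \<Rightarrow> real"
  assumes "linear f" "\<And>x. f x \<le> norm x"
  shows "bounded_linear f"
proof (rule bounded_linear_intro[where K = 1])
  show "f (x + y) = f x + f y" "f (c *\<^sub>R x) = c *\<^sub>R f x" for x y c
    using assms(1) by (simp_all add: linear_add linear_scale)
  fix x
  have "- f x \<le> norm x" using assms(2)[of "- x"] linear_neg[OF assms(1)] by simp
  then show "norm (f x) \<le> norm x * 1" using assms(2)[of x] by simp
qed

lemma convex_cone_separating_functional:
  fixes C :: "'a::real_normed_vector set"
  assumes C: "convex_cone C"
  obtains f :: "'a \<Rightarrow> real" where "bounded_linear f" "\<And>c. c \<in> C \<Longrightarrow> f c \<le> 0" "f z = infdist z C"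
proof -
  obtain f where f: "linear f" "\<And>x. f x \<le> infdist x C" "f z = infdist z C"
    using sublinear_supporting_linear[OF sublinear_infdist_convex_cone[OF C]] by blast
  have "f x \<le> norm x" for x
    using f(2)[of x] infdist_le[OF convex_cone_contains_0[OF C], of x] by simp
  with f(1) have "bounded_linear f" by (rule bounded_linear_if_le_norm)
  moreover have "f c \<le> 0" if "c \<in> C" for c using f(2)[of c] that by simp
  ultimately show ?thesis using f(3) that by blast
qed

lemma norm_ge_thickened_translate:
  fixes K :: "'a::real_normed_vector set"
  assumes far: "\<And>k. k \<in> K \<Longrightarrow> \<delta> \<le> dist a k" and u: "u \<in> (\<lambda>k. k - a) ` K + ball 0 r"
  shows "\<delta> - r \<le> norm u"
proof -
  obtain k y where ky: "u = k - a + y" "k \<in> K" "norm y < r"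
    using u unfolding set_plus_def by auto
  have "\<delta> \<le> norm (k - a)" using far[OF ky(2)] by (simp add: dist_norm norm_minus_commute)
  also have "\<dots> \<le> norm u + norm y" using norm_triangle_ineq4[of u y] ky(1) by simp
  finally show ?thesis using ky(3) by simp
qed

(* The cone is generated by K - a thickened by a ball, so a functional that is nonpositive on the
   cone stays below a fixed negative level on K - a: this gives strict separation. *)
lemma separating_functional_far_point:
  fixes K :: "'a::real_normed_vector set"
  assumes K: "convex K" "K \<noteq> {}" and \<delta>: "\<delta> > 0" and far: "\<And>k. k \<in> K \<Longrightarrow> \<delta> \<le> dist a k"
  obtains f :: "'a \<Rightarrow> real" and \<eta> :: real
  where "bounded_linear f" "\<eta> > 0" "\<And>k. k \<in> K \<Longrightarrow> f k \<le> f a - \<eta>"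
proof -
  obtain k0 where k0: "k0 \<in> K" using K(2) by blast
  define r where "r = \<delta> / 2"
  have r: "r > 0" using \<delta> by (simp add: r_def)
  define U where "U = (\<lambda>k. k - a) ` K + ball 0 r"
  define C where "C = convex_cone hull U"
  define z where "z = a - k0"
  have memU: "k - a + y \<in> U" if "k \<in> K" "norm y < r" for k y
    using that unfolding U_def by (intro set_plus_intro) auto
  have "convex U"
    unfolding U_def using K(1) by (intro convex_set_plus convex_translation_subtract) auto
  moreover have "r \<le> norm u" if "u \<in> U" for u
    using norm_ge_thickened_translate[OF far that[unfolded U_def]] by (simp add: r_def)
  ultimately have rz: "r \<le> infdist z C"
    using infdist_convex_cone_hull_ge[of U "k0 - a" r] memU[OF k0, of 0] r
    unfolding C_def z_def by simp
  obtain f where f: "bounded_linear f" "\<And>c. c \<in> C \<Longrightarrow> f c \<le> 0" "f z = infdist z C"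
    using convex_cone_separating_functional[OF convex_cone_convex_cone_hull]
    unfolding C_def by metis
  have "z \<noteq> 0"
    using rz r convex_cone_hull_contains_0[of U] by (auto simp: C_def)
  define y0 where "y0 = (r / (2 * norm z)) *\<^sub>R z"
  have "norm y0 < r" using \<open>z \<noteq> 0\<close> r by (simp add: y0_def)
  have pos: "f y0 > 0"
    using \<open>z \<noteq> 0\<close> r rz f(3) linear_scale[OF bounded_linear.linear[OF f(1)]] by (simp add: y0_def)
  have below: "f k \<le> f a - f y0" if "k \<in> K" for k
  proof -
    have "k - a + y0 \<in> C"
      using memU[OF that \<open>norm y0 < r\<close>] hull_subset[of U] by (auto simp: C_def)
    then have "f (k - a + y0) \<le> 0" by (rule f(2))
    then show ?thesis using bounded_linear.linear[OF f(1)] by (simp add: linear_add linear_diff)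
  qed
  show ?thesis using f(1) pos below by (rule that)
qed

section \<open>Slices and convex combinations of slices\<close>

lemma slice_subset: "slice A f e \<subseteq> A"
  unfolding slice_def by blast

lemma slice_nonempty:
  assumes "A \<noteq> {}" "bounded A" "bounded_linear f" "e > 0"
  shows "slice A f e \<noteq> {}"
proof -
  have "bdd_above (f ` A)"
    using assms(2,3) by (intro bounded_imp_bdd_above bounded_linear_image)
  then obtain y where "y \<in> f ` A" "Sup (f ` A) - e < y"
    using less_cSup_iff[of "f ` A" "Sup (f ` A) - e"] assms(1,4) by auto
  then show ?thesis unfolding slice_def by blast
qed

lemma is_slice_slice: "bounded_linear f \<Longrightarrow> e > 0 \<Longrightarrow> is_slice A (slice A f e)"
  unfolding is_slice_def by blast

lemma is_slice_self: "is_slice A A"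
proof -
  have "slice A (\<lambda>x. 0) 1 = A"
    by (cases "A = {}") (auto simp: slice_def image_constant_conv)
  then show ?thesis unfolding is_slice_def
    by (intro exI[of _ "\<lambda>x. 0"] exI[of _ "1::real"]) (simp add: bounded_linear_zero)
qed

lemma is_slice_subset: "is_slice A S \<Longrightarrow> S \<subseteq> A"
  unfolding is_slice_def using slice_subset by blast

lemma is_slice_nonempty: "is_slice A S \<Longrightarrow> A \<noteq> {} \<Longrightarrow> bounded A \<Longrightarrow> S \<noteq> {}"
  unfolding is_slice_def using slice_nonempty by blast

definition slice_combination ::
    "'a::real_normed_vector set \<Rightarrow> nat \<Rightarrow> (nat \<Rightarrow> real) \<Rightarrow> (nat \<Rightarrow> 'a set) \<Rightarrow> bool"
  where
  "slice_combination A m lam S \<longleftrightarrow>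
     m \<ge> 1 \<and> (\<forall>i<m. lam i > 0 \<and> is_slice A (S i)) \<and> (\<Sum>i<m. lam i) = 1"

definition combination_set :: "nat \<Rightarrow> (nat \<Rightarrow> real) \<Rightarrow> (nat \<Rightarrow> 'a::real_vector set) \<Rightarrow> 'a set" where
  "combination_set m lam S = {(\<Sum>i<m. lam i *\<^sub>R x i) | x. \<forall>i<m. x i \<in> S i}"

lemma is_ccs_iff:
  "is_ccs A C \<longleftrightarrow> (\<exists>m lam S. slice_combination A m lam S \<and> C = combination_set m lam S)"
  unfolding is_ccs_def slice_combination_def combination_set_def by blast

lemma combination_set_subset:
  assumes "convex A" "slice_combination A m lam S"
  shows "combination_set m lam S \<subseteq> A"
proof
  fix q assume "q \<in> combination_set m lam S"
  then obtain x where x: "q = (\<Sum>i<m. lam i *\<^sub>R x i)" "\<forall>i<m. x i \<in> S i"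
    unfolding combination_set_def by blast
  show "q \<in> A"
    unfolding x(1) using assms x(2) is_slice_subset
    by (intro convex_sum) (auto simp: slice_combination_def less_imp_le)
qed

lemma combination_set_meets_convex_hull:
  assumes "\<And>i. i < m \<Longrightarrow> lam i \<ge> 0" "(\<Sum>i<m. lam i) = 1" "\<And>i. i < m \<Longrightarrow> B \<inter> S i \<noteq> {}"
  shows "combination_set m lam S \<inter> convex hull B \<noteq> {}"
proof -
  define x where "x i = (SOME y. y \<in> B \<inter> S i)" for i
  have x: "x i \<in> B \<inter> S i" if "i < m" for i
    using assms(3)[OF that] unfolding x_def some_in_eq .
  then have "(\<Sum>i<m. lam i *\<^sub>R x i) \<in> combination_set m lam S"
    unfolding combination_set_def by blast
  moreover have "(\<Sum>i<m. lam i *\<^sub>R x i) \<in> convex hull B"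
    using assms x by (intro convex_sum) (auto simp: hull_inc)
  ultimately show ?thesis by blast
qed

lemma combination_set_nonempty:
  assumes "slice_combination A m lam S" "A \<noteq> {}" "bounded A"
  shows "combination_set m lam S \<noteq> {}"
proof -
  have "A \<inter> S i \<noteq> {}" if "i < m" for i
    using assms that is_slice_nonempty is_slice_subset
    by (metis Int_absorb1 slice_combination_def)
  then show ?thesis
    using combination_set_meets_convex_hull[of m lam A S] assms(1)
    by (auto simp: slice_combination_def less_imp_le)
qed

section \<open>Sets meeting a countable family of slices\<close>

definition meets_combination_in_ball :: "'a::real_normed_vector set \<Rightarrow> 'a set \<Rightarrow> 'a \<Rightarrow> real \<Rightarrow> bool"
  where "meets_combination_in_ball A B d r \<longleftrightarrow> (\<exists>m lam S. slice_combination A m lam S \<and>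
    combination_set m lam S \<subseteq> ball d r \<and> (\<forall>i<m. B \<inter> S i \<noteq> {}))"

lemma small_combination_in_ball_near_slice:
  fixes A :: "'a::real_normed_vector set"
  assumes A: "bounded A" "A \<noteq> {}" and scs: "small_comb_slices A" and D: "A \<subseteq> closure D"
    and f: "bounded_linear f" and e: "e > 0"
  obtains d c C where "d \<in> D" "is_ccs A C" "C \<subseteq> ball d (1 / Suc n)" "c \<in> slice A f e"
    "dist d c < 1 / Suc n"
proof -
  define \<rho> where "\<rho> = 1 / (2 * real (Suc n))"
  have \<rho>: "\<rho> > 0" and two_\<rho>: "2 * \<rho> = 1 / Suc n"
    by (simp_all add: \<rho>_def field_simps)
  have "is_slice A (slice A f e)" using f e by (rule is_slice_slice)
  then obtain C where C: "is_ccs A C" "C \<subseteq> slice A f e" "diameter C < \<rho>"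
    using scs[unfolded small_comb_slices_def, rule_format, OF _ \<rho>] by blast
  have "C \<noteq> {}" using C(1) combination_set_nonempty A by (auto simp: is_ccs_iff)
  then obtain c where c: "c \<in> C" by blast
  have CA: "C \<subseteq> A" using C(2) slice_subset by blast
  have "c \<in> closure D" using D CA c by blast
  then obtain d where d: "d \<in> D" "dist d c < \<rho>"
    using \<rho> unfolding closure_approachable by blast
  have "C \<subseteq> ball d (1 / Suc n)"
  proof
    fix x assume "x \<in> C"
    then have "dist c x \<le> diameter C"
      using bounded_subset[OF A(1) CA] c by (intro diameter_bounded_bound)
    then have "dist d x < 2 * \<rho>" using d(2) C(3) dist_triangle[of d x c] by linarith
    then show "x \<in> ball d (1 / Suc n)" by (simp add: two_\<rho>)
  qed
  moreover have "dist d c < 1 / Suc n" using d(2) \<rho> two_\<rho> by linarith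
  ultimately show ?thesis using that d(1) C(1) C(2) c by blast
qed

lemma convex_hull_meets_slice:
  fixes A :: "'a::real_normed_vector set"
  assumes A: "convex A" "bounded A" "A \<noteq> {}" and scs: "small_comb_slices A"
    and D: "A \<subseteq> closure D"
    and witness: "\<And>d n C. d \<in> D \<Longrightarrow> is_ccs A C \<Longrightarrow> C \<subseteq> ball d (1 / Suc n) \<Longrightarrow>
      meets_combination_in_ball A B d (1 / Suc n)"
    and f: "bounded_linear f" and e: "e > 0"
  shows "convex hull B \<inter> slice A f e \<noteq> {}"
proof -
  obtain K where K: "K > 0" "\<And>x. norm (f x) \<le> norm x * K"
    using bounded_linear.pos_bounded[OF f] by blast
  obtain n where n: "inverse (real (Suc n)) < e / (4 * K)"
    using reals_Archimedean[of "e / (4 * K)"] e K by auto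
  have "e / 2 > 0" using e by simp
  then obtain d c C where "d \<in> D" and C: "is_ccs A C" "C \<subseteq> ball d (1 / Suc n)"
    and c: "c \<in> slice A f (e / 2)" and "dist d c < 1 / Suc n"
    by (rule small_combination_in_ball_near_slice[OF A(2,3) scs D f])
  obtain m lam S where mS: "slice_combination A m lam S"
      "combination_set m lam S \<subseteq> ball d (1 / Suc n)" "\<forall>i<m. B \<inter> S i \<noteq> {}"
    using witness[OF \<open>d \<in> D\<close> C] unfolding meets_combination_in_ball_def by blast
  have "combination_set m lam S \<inter> convex hull B \<noteq> {}"
    using mS(1,3) by (intro combination_set_meets_convex_hull) (auto simp: slice_combination_def)
  then obtain q where q: "q \<in> combination_set m lam S" "q \<in> convex hull B" by blast
  have dcq: "dist c q < 2 / Suc n"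
    using subsetD[OF mS(2) q(1)] \<open>dist d c < 1 / Suc n\<close> dist_triangle[of c q d]
    by (simp add: dist_commute)
  have "f c - f q \<le> K * dist c q"
    using K(2)[of "c - q"] linear_diff[OF bounded_linear.linear[OF f]]
    by (simp add: dist_norm mult.commute)
  also have "\<dots> < K * (2 / Suc n)" using dcq K(1) by (rule mult_strict_left_mono)
  also have "\<dots> < e / 2" using n K(1) by (simp add: field_simps)
  finally have "f c - f q < e / 2" .
  moreover have "f c > Sup (f ` A) - e / 2" "q \<in> A"
    using c combination_set_subset[OF A(1) mS(1)] q(1) by (auto simp: slice_def)
  ultimately have "q \<in> slice A f e" by (simp add: slice_def)
  then show ?thesis using q(2) by blast
qed

lemma mem_closure_convex_hull_if_meets_slices:
  fixes A :: "'a::real_normed_vector set"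
  assumes a: "a \<in> A" and "bounded A"
    and meets: "\<And>f e. bounded_linear f \<Longrightarrow> e > 0 \<Longrightarrow> convex hull B \<inter> slice A f e \<noteq> {}"
  shows "a \<in> closure (convex hull B)"
proof (rule ccontr)
  assume "a \<notin> closure (convex hull B)"
  then obtain \<delta> where \<delta>: "\<delta> > 0" and away: "\<forall>k\<in>convex hull B. \<not> dist k a < \<delta>"
    unfolding closure_approachable by blast
  have far: "\<delta> \<le> dist a k" if "k \<in> convex hull B" for k
  proof -
    have "\<not> dist k a < \<delta>" using away that by blast
    then show ?thesis by (simp add: dist_commute not_less)
  qed
  have "convex hull B \<inter> slice A (\<lambda>x. 0) 1 \<noteq> {}" using bounded_linear_zero by (rule meets) simp
  then have "convex hull B \<noteq> {}" by blast
  then obtain f :: "'a \<Rightarrow> real" and \<eta>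
    where f: "bounded_linear f" "\<eta> > 0" "\<And>k. k \<in> convex hull B \<Longrightarrow> f k \<le> f a - \<eta>"
    using separating_functional_far_point[of "convex hull B" \<delta> a] \<delta> far by auto
  obtain x where x: "x \<in> convex hull B" "x \<in> slice A f \<eta>" using meets[OF f(1,2)] by blast
  have "f a \<le> Sup (f ` A)"
    using a bounded_imp_bdd_above[OF bounded_linear_image[OF \<open>bounded A\<close> f(1)]]
    by (rule cSup_upper[OF imageI])
  moreover have "f x > Sup (f ` A) - \<eta>" using x(2) by (simp add: slice_def)
  ultimately show False using f(3)[OF x(1)] by linarith
qed

lemma SCD_setI_countable:
  assumes "countable \<Sigma>" "\<And>S. S \<in> \<Sigma> \<Longrightarrow> is_slice A S"
    and "\<And>B. B \<subseteq> A \<Longrightarrow> (\<And>S. S \<in> \<Sigma> \<Longrightarrow> B \<inter> S \<noteq> {}) \<Longrightarrow> A \<subseteq> closure (convex hull B)"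
  shows "SCD_set A"
proof -
  \<comment> \<open>\<open>A\<close> is added to make the family nonempty, as \<open>from_nat_into\<close> requires\<close>
  have range: "range (from_nat_into (insert A \<Sigma>)) = insert A \<Sigma>"
    using assms(1) by (intro range_from_nat_into) auto
  show ?thesis
    unfolding SCD_set_def
  proof (intro exI conjI allI impI)
    show "is_slice A (from_nat_into (insert A \<Sigma>) n)" for n
      using range assms(2) is_slice_self by (metis insert_iff rangeI)
    show "A \<subseteq> closure (convex hull B)"
      if "B \<subseteq> A \<and> (\<forall>n. B \<inter> from_nat_into (insert A \<Sigma>) n \<noteq> {})" for B
      using that assms(3) range by (metis insert_iff rangeE)
  qed
qed

lemma countable_slices_of_combinations_in_balls:
  fixes A :: "'a::real_normed_vector set"
  assumes "countable D"
  obtains \<Sigma> where "countable \<Sigma>" "\<And>S. S \<in> \<Sigma> \<Longrightarrow> is_slice A S"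
    "\<And>B d n C. (\<And>S. S \<in> \<Sigma> \<Longrightarrow> B \<inter> S \<noteq> {}) \<Longrightarrow> d \<in> D \<Longrightarrow> is_ccs A C \<Longrightarrow>
      C \<subseteq> ball d (1 / Suc n) \<Longrightarrow> meets_combination_in_ball A B d (1 / Suc n)"
proof -
  define good where "good d n m lam S \<longleftrightarrow>
    slice_combination A m lam S \<and> combination_set m lam S \<subseteq> ball d (1 / Suc n)" for d n m lam S
  define J where "J = {(d, n). d \<in> D \<and> (\<exists>m lam S. good d n m lam S)}"
  have "\<forall>d n. \<exists>m lam S. (d, n) \<in> J \<longrightarrow> good d n m lam S" by (auto simp: J_def)
  then obtain M L T where MLT: "\<forall>d n. (d, n) \<in> J \<longrightarrow> good d n (M d n) (L d n) (T d n)" by metis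
  define \<Sigma> where "\<Sigma> = (\<Union>(d, n)\<in>J. T d n ` {..<M d n})"
  have "J \<subseteq> D \<times> UNIV" by (auto simp: J_def)
  moreover have "countable (D \<times> (UNIV :: nat set))" using assms by simp
  ultimately have "countable J" by (rule countable_subset)
  then have "countable \<Sigma>" unfolding \<Sigma>_def by auto
  moreover have "is_slice A S" if "S \<in> \<Sigma>" for S
  proof -
    obtain d n i where "(d, n) \<in> J" "i < M d n" "S = T d n i"
      using \<open>S \<in> \<Sigma>\<close> unfolding \<Sigma>_def by blast
    then show ?thesis using MLT by (simp add: good_def slice_combination_def)
  qed
  moreover have "meets_combination_in_ball A B d (1 / Suc n)"
    if B: "\<And>S. S \<in> \<Sigma> \<Longrightarrow> B \<inter> S \<noteq> {}" and "d \<in> D" "is_ccs A C" "C \<subseteq> ball d (1 / Suc n)"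
    for B d n C
  proof -
    have dn: "(d, n) \<in> J" using that by (auto simp: J_def good_def is_ccs_iff)
    then have "good d n (M d n) (L d n) (T d n)" using MLT by blast
    moreover have "\<forall>i<M d n. B \<inter> T d n i \<noteq> {}" using dn B unfolding \<Sigma>_def by blast
    ultimately show ?thesis unfolding good_def meets_combination_in_ball_def by blast
  qed
  ultimately show ?thesis by (rule that)
qed

theorem theorem2p19:
  fixes A :: "'a::banach set"
  assumes "separable_set A" and "closed A" and "convex A" and "bounded A"
    and "small_comb_slices A"
  shows "SCD_set A"
proof -
  obtain D where D: "countable D" "A \<subseteq> closure D"
    using assms(1) unfolding separable_set_def by blast
  show ?thesis
  proof (rule countable_slices_of_combinations_in_balls[OF D(1), where A = A])
    fix \<Sigma> assume \<Sigma>: "countable \<Sigma>" "\<And>S. S \<in> \<Sigma> \<Longrightarrow> is_slice A S"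
      and witness: "\<And>B d n C. (\<And>S. S \<in> \<Sigma> \<Longrightarrow> B \<inter> S \<noteq> {}) \<Longrightarrow> d \<in> D \<Longrightarrow> is_ccs A C \<Longrightarrow>
        C \<subseteq> ball d (1 / Suc n) \<Longrightarrow> meets_combination_in_ball A B d (1 / Suc n)"
    show ?thesis
    proof (rule SCD_setI_countable[OF \<Sigma>])
      fix B assume B: "\<And>S. S \<in> \<Sigma> \<Longrightarrow> B \<inter> S \<noteq> {}"
      show "A \<subseteq> closure (convex hull B)"
      proof
        fix a assume a: "a \<in> A"
        then have "A \<noteq> {}" by blast
        have "convex hull B \<inter> slice A f e \<noteq> {}" if "bounded_linear f" "e > 0" for f e
          by (rule convex_hull_meets_slice[OF assms(3,4) \<open>A \<noteq> {}\<close> assms(5) D(2) _ that])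
            (rule witness[OF B])
        with a assms(4) show "a \<in> closure (convex hull B)"
          by (rule mem_closure_convex_hull_if_meets_slices)
      qed
    qed
  qed
qed

end
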